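(* Let $p:\mathbb{R}\to(1,\infty)$ be a measurable function in the class $LH$. For $k>0$ let $H_k=\{x+iy\in\mathbb{C}:y\ge k\}$. If $U\in h^{p(\cdot)}(\mathbb{C}_+)$, then $U$ is bounded on $H_k$ for every $k>0$.
   Context: $\mathbb{C}_+=\{z\in\mathbb{C}:\operatorname{Im}z>0\}$ is the upper half-plane. A measurable $p:\mathbb{R}\to(1,\infty)$ is in the class $LH$ if (i) there is $C_{\log}>0$ with $|p(x)-p(y)|\le C_{\log}/\log(1/|x-y|)$ for all $x,y\in\mathbb{R}$ with $|x-y|<1/2$, and (ii) there are constants $p_\infty\in\mathbb{R}$ and $C_\infty>0$ with $|p(x)-p_\infty|\le C_\infty/\log(e+|x|)$ for all $x\in\mathbb{R}$. The space $h^{p(\cdot)}(\mathbb{C}_+)$ consists of harmonic functions $U$ on $\mathbb{C}_+$ with $\sup_{y>0}\int_{-\infty}^{\infty}|U(x+iy)|^{p(x)}\,dx<\infty$. *)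

theory Defs
  imports "HOL-Analysis.Analysis"
begin

definition upper_half_plane :: "complex set" where
  "upper_half_plane = {z. Im z > 0}"

definition harmonic_on :: "(complex \<Rightarrow> real) \<Rightarrow> complex set \<Rightarrow> bool" where
  "harmonic_on U S \<longleftrightarrow> open S \<and>
     (\<exists>DU :: complex \<Rightarrow> complex \<Rightarrow>\<^sub>L real.
        (\<forall>z\<in>S. (U has_derivative blinfun_apply (DU z)) (at z)) \<and>
        (\<exists>D2U :: complex \<Rightarrow> complex \<Rightarrow>\<^sub>L (complex \<Rightarrow>\<^sub>L real).
           (\<forall>z\<in>S. (DU has_derivative blinfun_apply (D2U z)) (at z)) \<and>
           continuous_on S D2U \<and>
           (\<forall>z\<in>S. D2U z 1 1 + D2U z \<i> \<i> = 0)))"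

definition LH :: "(real \<Rightarrow> real) \<Rightarrow> bool" where
  "LH p \<longleftrightarrow> p \<in> borel_measurable lborel \<and> (\<forall>x. p x > 1) \<and>
     (\<exists>Clog>0. \<forall>x y. \<bar>x - y\<bar> < 1/2 \<longrightarrow> \<bar>p x - p y\<bar> \<le> Clog / ln (1 / \<bar>x - y\<bar>)) \<and>
     (\<exists>pinf Cinf. Cinf > 0 \<and> (\<forall>x. \<bar>p x - pinf\<bar> \<le> Cinf / ln (exp 1 + \<bar>x\<bar>)))"

definition hp_var :: "(real \<Rightarrow> real) \<Rightarrow> (complex \<Rightarrow> real) set" where
  "hp_var p = {U. harmonic_on U upper_half_plane \<and>
     (SUP y\<in>{0<..}. \<integral>\<^sup>+ x. ennreal (\<bar>U (Complex x y)\<bar> powr p x) \<partial>lborel) < \<infinity>}"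

end

theory Submission
  imports Defs "HOL-Complex_Analysis.Complex_Analysis"
begin

text \<open>By the mean value property, \<open>\<bar>U z\<bar>\<close> is at most the average of \<open>\<bar>U\<bar>\<close> over the circles
  of radius \<open>r \<in> [R/2, R]\<close> about \<open>z\<close>.  Integrating over \<open>r\<close> and passing to Cartesian
  coordinates bounds this by \<open>1/(\<pi> R)\<close> times the integral over \<open>y \<in> [0, R]\<close> of the integrals
  of \<open>\<bar>U\<bar>\<close> along the horizontal segments of length \<open>2R\<close> at heights \<open>Im z \<plusminus> y\<close>.  For
  \<open>Im z \<ge> k\<close> and \<open>R = k/2\<close> these segments lie in the half plane, and since
  \<open>\<bar>u\<bar> \<le> 1 + \<bar>u\<bar>\<^sup>p\<close> for \<open>p \<ge> 1\<close>, the integral along each of them is at most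
  \<open>2R + sup\<^sub>y \<integral> \<bar>U (x + i y)\<bar>\<^bsup>p(x)\<^esup> dx\<close>.  The mean value property is obtained by writing \<open>U\<close> on the convex
  half plane as the real part of a holomorphic function.\<close>

section \<open>Symmetry of second derivatives\<close>

lemma has_real_derivative_along_line:
  fixes f :: "'a::real_normed_vector \<Rightarrow> real"
  assumes "(f has_derivative f') (at (b + t *\<^sub>R v))"
  shows "((\<lambda>t. f (b + t *\<^sub>R v)) has_real_derivative f' v) (at t)"
proof -
  have "((\<lambda>t. b + t *\<^sub>R v) has_derivative (\<lambda>h. h *\<^sub>R v)) (at t)"
    by (auto intro!: derivative_eq_intros)
  from has_derivative_compose[OF this assms]
  have "((\<lambda>t. f (b + t *\<^sub>R v)) has_derivative (\<lambda>h. f' (h *\<^sub>R v))) (at t)" .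
  moreover have "(\<lambda>h. f' (h *\<^sub>R v)) = (*) (f' v)"
    using has_derivative_linear[OF assms] by (auto simp: linear_scale mult.commute)
  ultimately show ?thesis by (simp add: has_field_derivative_def)
qed

lemma second_difference_mean_value:
  fixes f :: "'a::real_normed_vector \<Rightarrow> real"
  assumes f': "\<And>z. z \<in> S \<Longrightarrow> (f has_derivative blinfun_apply (f' z)) (at z)"
    and f'': "\<And>z. z \<in> S \<Longrightarrow> (f' has_derivative blinfun_apply (f'' z)) (at z)"
    and square: "\<And>a b. a \<in> {0..s} \<Longrightarrow> b \<in> {0..s} \<Longrightarrow> w + a *\<^sub>R u + b *\<^sub>R v \<in> S"
    and "s > 0"
  obtains a b where "a \<in> {0<..<s}" "b \<in> {0<..<s}"
    "f (w + s *\<^sub>R u + s *\<^sub>R v) - f (w + s *\<^sub>R u) - f (w + s *\<^sub>R v) + f w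
       = s * s * f'' (w + a *\<^sub>R u + b *\<^sub>R v) v u"
proof -
  have "\<exists>a. 0 < a \<and> a < s \<and>
      (f (w + s *\<^sub>R v + s *\<^sub>R u) - f (w + s *\<^sub>R u)) - (f (w + s *\<^sub>R v + 0 *\<^sub>R u) - f (w + 0 *\<^sub>R u))
        = (s - 0) * (f' (w + s *\<^sub>R v + a *\<^sub>R u) u - f' (w + a *\<^sub>R u) u)"
  proof (rule MVT2[where f = "\<lambda>x. f (w + s *\<^sub>R v + x *\<^sub>R u) - f (w + x *\<^sub>R u)"])
    fix x assume "0 \<le> x" "x \<le> s"
    then have "w + s *\<^sub>R v + x *\<^sub>R u \<in> S" "w + x *\<^sub>R u \<in> S"
      using square[of x s] square[of x 0] \<open>s > 0\<close> by (simp_all add: add_ac)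
    then show "((\<lambda>x. f (w + s *\<^sub>R v + x *\<^sub>R u) - f (w + x *\<^sub>R u)) has_real_derivative
        f' (w + s *\<^sub>R v + x *\<^sub>R u) u - f' (w + x *\<^sub>R u) u) (at x)"
      by (intro DERIV_diff has_real_derivative_along_line f')
  qed (use \<open>s > 0\<close> in simp)
  then obtain a where a: "0 < a" "a < s"
    and diff_a: "f (w + s *\<^sub>R u + s *\<^sub>R v) - f (w + s *\<^sub>R u) - f (w + s *\<^sub>R v) + f w
       = s * (f' (w + a *\<^sub>R u + s *\<^sub>R v) u - f' (w + a *\<^sub>R u) u)"
    by (auto simp: add_ac)
  have "\<exists>b. 0 < b \<and> b < s \<and>
      f' (w + a *\<^sub>R u + s *\<^sub>R v) u - f' (w + a *\<^sub>R u + 0 *\<^sub>R v) u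
        = (s - 0) * f'' (w + a *\<^sub>R u + b *\<^sub>R v) v u"
  proof (rule MVT2[where f = "\<lambda>y. f' (w + a *\<^sub>R u + y *\<^sub>R v) u"])
    fix y assume "0 \<le> y" "y \<le> s"
    then have "w + a *\<^sub>R u + y *\<^sub>R v \<in> S" using square a by simp
    then have "((\<lambda>z. f' z u) has_derivative (\<lambda>h. f'' (w + a *\<^sub>R u + y *\<^sub>R v) h u))
        (at (w + a *\<^sub>R u + y *\<^sub>R v))"
      by (auto intro!: derivative_eq_intros f'')
    then show "((\<lambda>y. f' (w + a *\<^sub>R u + y *\<^sub>R v) u) has_real_derivative
        f'' (w + a *\<^sub>R u + y *\<^sub>R v) v u) (at y)"
      by (rule has_real_derivative_along_line)
  qed (use \<open>s > 0\<close> in simp)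
  then obtain b where "0 < b" "b < s"
    "f' (w + a *\<^sub>R u + s *\<^sub>R v) u - f' (w + a *\<^sub>R u) u = s * f'' (w + a *\<^sub>R u + b *\<^sub>R v) v u"
    by auto
  with a diff_a show ?thesis by (intro that[of a b]) auto
qed

lemma second_derivative_swap_nearby:
  fixes f :: "'a::real_normed_vector \<Rightarrow> real"
  assumes f': "\<And>z. z \<in> S \<Longrightarrow> (f has_derivative blinfun_apply (f' z)) (at z)"
    and f'': "\<And>z. z \<in> S \<Longrightarrow> (f' has_derivative blinfun_apply (f'' z)) (at z)"
    and "ball w \<delta> \<subseteq> S" "\<delta> > 0"
  obtains p q where "dist p w < \<delta>" "dist q w < \<delta>" "f'' p v u = f'' q u v"
proof -
  define L where "L = norm u + norm v + 1"
  have "L > 0" by (simp add: L_def add_nonneg_pos)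
  define s where "s = \<delta> / 2 / L"
  have "s > 0" using \<open>\<delta> > 0\<close> \<open>L > 0\<close> by (simp add: s_def)
  have near: "dist (w + a *\<^sub>R x + b *\<^sub>R y) w < \<delta>"
    if "a \<in> {0..s}" "b \<in> {0..s}" "norm x + norm y = norm u + norm v" for a b x y
  proof -
    have "dist (w + a *\<^sub>R x + b *\<^sub>R y) w \<le> a * norm x + b * norm y"
      using that(1,2) norm_triangle_ineq[of "a *\<^sub>R x" "b *\<^sub>R y"] by (simp add: dist_norm add.assoc)
    also have "\<dots> \<le> s * (norm x + norm y)"
      using that(1,2) by (auto simp: distrib_left intro!: add_mono mult_right_mono)
    also have "\<dots> < s * L" using \<open>s > 0\<close> that(3) by (simp add: L_def)
    also have "\<dots> < \<delta>" using \<open>\<delta> > 0\<close> \<open>L > 0\<close> by (simp add: s_def)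
    finally show ?thesis .
  qed
  have square: "w + a *\<^sub>R x + b *\<^sub>R y \<in> S"
    if "a \<in> {0..s}" "b \<in> {0..s}" "norm x + norm y = norm u + norm v" for a b x y
    using near[OF that] \<open>ball w \<delta> \<subseteq> S\<close> by (auto simp: dist_commute)
  obtain a1 b1 where ab1: "a1 \<in> {0<..<s}" "b1 \<in> {0<..<s}"
    and eq1: "f (w + s *\<^sub>R u + s *\<^sub>R v) - f (w + s *\<^sub>R u) - f (w + s *\<^sub>R v) + f w
       = s * s * f'' (w + a1 *\<^sub>R u + b1 *\<^sub>R v) v u"
    using second_difference_mean_value[OF f' f'' square \<open>s > 0\<close>, of u v] by auto
  obtain a2 b2 where ab2: "a2 \<in> {0<..<s}" "b2 \<in> {0<..<s}"
    and eq2: "f (w + s *\<^sub>R v + s *\<^sub>R u) - f (w + s *\<^sub>R v) - f (w + s *\<^sub>R u) + f w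
       = s * s * f'' (w + a2 *\<^sub>R v + b2 *\<^sub>R u) u v"
    using second_difference_mean_value[OF f' f'' square \<open>s > 0\<close>, of v u] by (auto simp: add.commute)
  have "s * s * f'' (w + a1 *\<^sub>R u + b1 *\<^sub>R v) v u = s * s * f'' (w + a2 *\<^sub>R v + b2 *\<^sub>R u) u v"
    using eq1 eq2 by (simp add: algebra_simps)
  then have "f'' (w + a1 *\<^sub>R u + b1 *\<^sub>R v) v u = f'' (w + a2 *\<^sub>R v + b2 *\<^sub>R u) u v"
    using \<open>s > 0\<close> by simp
  moreover have "dist (w + a1 *\<^sub>R u + b1 *\<^sub>R v) w < \<delta>" "dist (w + a2 *\<^sub>R v + b2 *\<^sub>R u) w < \<delta>"
    using ab1 ab2 by (auto intro!: near)
  ultimately show ?thesis using that by blast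
qed

lemma second_derivative_symmetric:
  fixes f :: "'a::real_normed_vector \<Rightarrow> real"
  assumes "open S" "w \<in> S"
    and f': "\<And>z. z \<in> S \<Longrightarrow> (f has_derivative blinfun_apply (f' z)) (at z)"
    and f'': "\<And>z. z \<in> S \<Longrightarrow> (f' has_derivative blinfun_apply (f'' z)) (at z)"
    and "continuous_on S f''"
  shows "f'' w u v = f'' w v u"
proof (rule ccontr)
  define D where "D = \<bar>f'' w v u - f'' w u v\<bar>"
  assume "f'' w u v \<noteq> f'' w v u"
  then have "D > 0" by (simp add: D_def)
  define K where "K = norm u * norm v + 1"
  have "K > 0" by (simp add: K_def add_nonneg_pos)
  define e where "e = D / 2 / K"
  have "e > 0" using \<open>D > 0\<close> \<open>K > 0\<close> by (simp add: e_def)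
  obtain \<delta>1 where "\<delta>1 > 0" "ball w \<delta>1 \<subseteq> S"
    using \<open>open S\<close> \<open>w \<in> S\<close> open_contains_ball by blast
  moreover have "isCont f'' w"
    using \<open>continuous_on S f''\<close> \<open>open S\<close> \<open>w \<in> S\<close> continuous_on_eq_continuous_at by blast
  then obtain \<delta>2 where "\<delta>2 > 0" and cont: "\<And>p. dist p w < \<delta>2 \<Longrightarrow> norm (f'' p - f'' w) < e"
    using \<open>e > 0\<close> unfolding continuous_at_eps_delta dist_norm by blast
  ultimately have "ball w (min \<delta>1 \<delta>2) \<subseteq> S" "min \<delta>1 \<delta>2 > 0" by auto
  then obtain p q where "dist p w < min \<delta>1 \<delta>2" "dist q w < min \<delta>1 \<delta>2" "f'' p v u = f'' q u v"
    using second_derivative_swap_nearby[OF f' f''] by blast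
  have close: "\<bar>f'' r x y - f'' w x y\<bar> < D / 2"
    if "dist r w < \<delta>2" "norm x * norm y = norm u * norm v" for r x y
  proof -
    have "\<bar>f'' r x y - f'' w x y\<bar> = norm ((f'' r - f'' w) x y)"
      by (simp add: blinfun.diff_left)
    also have "\<dots> \<le> norm (f'' r - f'' w) * norm x * norm y"
      by (intro order_trans[OF norm_blinfun] mult_right_mono norm_blinfun) simp
    also have "\<dots> \<le> e * (norm u * norm v)"
      using cont[OF that(1)] that(2) by (simp add: mult.assoc mult_right_mono)
    also have "\<dots> < e * K" using \<open>e > 0\<close> by (simp add: K_def)
    also have "\<dots> = D / 2" using \<open>K > 0\<close> by (simp add: e_def)
    finally show ?thesis .
  qed
  have "\<bar>f'' p v u - f'' w v u\<bar> < D / 2"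
    using close[of p v u] \<open>dist p w < min \<delta>1 \<delta>2\<close> by (simp add: mult.commute)
  moreover have "\<bar>f'' q u v - f'' w u v\<bar> < D / 2"
    using close[of q u v] \<open>dist q w < min \<delta>1 \<delta>2\<close> by simp
  ultimately show False using \<open>f'' p v u = f'' q u v\<close> unfolding D_def by argo
qed

section \<open>Mean value property of harmonic functions\<close>

lemma blinfun_apply_complex:
  fixes L :: "complex \<Rightarrow>\<^sub>L 'b::real_normed_vector"
  shows "L h = Re h *\<^sub>R L 1 + Im h *\<^sub>R L \<i>"
proof -
  have "h = Re h *\<^sub>R 1 + Im h *\<^sub>R \<i>" by (simp add: complex_eq_iff)
  then have "L h = L (Re h *\<^sub>R 1 + Im h *\<^sub>R \<i>)" by simp
  also have "\<dots> = Re h *\<^sub>R L 1 + Im h *\<^sub>R L \<i>"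
    by (simp add: blinfun.add_right blinfun.scaleR_right)
  finally show ?thesis .
qed

text \<open>The Cauchy--Riemann equations for \<open>U\<^sub>x - i U\<^sub>y\<close> are the Laplace equation and the
  symmetry of the mixed second derivatives.\<close>

lemma harmonic_gradient_holomorphic:
  fixes U :: "complex \<Rightarrow> real"
  assumes "open S"
    and U': "\<And>z. z \<in> S \<Longrightarrow> (U has_derivative blinfun_apply (U' z)) (at z)"
    and U'': "\<And>z. z \<in> S \<Longrightarrow> (U' has_derivative blinfun_apply (U'' z)) (at z)"
    and "continuous_on S U''"
    and laplace: "\<And>z. z \<in> S \<Longrightarrow> U'' z 1 1 + U'' z \<i> \<i> = 0"
  shows "(\<lambda>z. complex_of_real (U' z 1) - \<i> * complex_of_real (U' z \<i>)) holomorphic_on S"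
proof -
  have "((\<lambda>z. complex_of_real (U' z 1) - \<i> * complex_of_real (U' z \<i>)) has_field_derivative
      complex_of_real (U'' z 1 1) - \<i> * complex_of_real (U'' z 1 \<i>)) (at z)"
    if "z \<in> S" for z
  proof -
    have sym: "U'' z \<i> 1 = U'' z 1 \<i>"
      by (rule second_derivative_symmetric[OF \<open>open S\<close> that U' U'' \<open>continuous_on S U''\<close>])
    have "((\<lambda>z. complex_of_real (U' z 1) - \<i> * complex_of_real (U' z \<i>)) has_derivative
        (\<lambda>h. complex_of_real (U'' z h 1) - \<i> * complex_of_real (U'' z h \<i>))) (at z)"
      using that by (auto intro!: derivative_eq_intros U'')
    moreover have "(\<lambda>h. complex_of_real (U'' z h 1) - \<i> * complex_of_real (U'' z h \<i>))
        = (*) (complex_of_real (U'' z 1 1) - \<i> * complex_of_real (U'' z 1 \<i>))"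
    proof
      fix h
      have "U'' z h = Re h *\<^sub>R U'' z 1 + Im h *\<^sub>R U'' z \<i>"
        by (rule blinfun_apply_complex)
      then show "complex_of_real (U'' z h 1) - \<i> * complex_of_real (U'' z h \<i>)
          = (complex_of_real (U'' z 1 1) - \<i> * complex_of_real (U'' z 1 \<i>)) * h"
        using sym laplace[OF that]
        by (simp add: blinfun.add_left blinfun.scaleR_left complex_eq_iff algebra_simps add_eq_0_iff)
    qed
    ultimately show ?thesis by (simp add: has_field_derivative_def)
  qed
  then show ?thesis
    using \<open>open S\<close> by (auto simp: holomorphic_on_open field_differentiable_def)
qed

lemma harmonic_on_convex_imp_Re_holomorphic:
  assumes "harmonic_on U S" "convex S"
  obtains F where "F holomorphic_on S" "\<And>z. z \<in> S \<Longrightarrow> U z = Re (F z)"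
proof -
  obtain U' :: "complex \<Rightarrow> complex \<Rightarrow>\<^sub>L real" and U'' :: "complex \<Rightarrow> complex \<Rightarrow>\<^sub>L (complex \<Rightarrow>\<^sub>L real)"
    where "open S"
      and U': "\<And>z. z \<in> S \<Longrightarrow> (U has_derivative blinfun_apply (U' z)) (at z)"
      and U'': "\<And>z. z \<in> S \<Longrightarrow> (U' has_derivative blinfun_apply (U'' z)) (at z)"
      and "continuous_on S U''" "\<And>z. z \<in> S \<Longrightarrow> U'' z 1 1 + U'' z \<i> \<i> = 0"
    using assms(1) unfolding harmonic_on_def by blast
  define f where "f z = complex_of_real (U' z 1) - \<i> * complex_of_real (U' z \<i>)" for z
  have "f holomorphic_on S"
    unfolding f_def by (rule harmonic_gradient_holomorphic) fact+
  then obtain G where G: "\<And>z. z \<in> S \<Longrightarrow> (G has_field_derivative f z) (at z)"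
    using holomorphic_convex_primitive'[OF \<open>convex S\<close> \<open>open S\<close>] at_within_open[OF _ \<open>open S\<close>]
    by metis
  have "\<exists>c. \<forall>z\<in>S. U z - Re (G z) = c"
  proof (rule has_derivative_zero_constant[OF \<open>convex S\<close>])
    fix z assume "z \<in> S"
    have "((\<lambda>z. U z - Re (G z)) has_derivative (\<lambda>h. U' z h - Re (f z * h))) (at z)"
      using U' G \<open>z \<in> S\<close> by (auto intro!: derivative_eq_intros simp: has_field_derivative_def)
    moreover have "(\<lambda>h. U' z h - Re (f z * h)) = (\<lambda>h. 0)"
      by (subst blinfun_apply_complex) (simp add: f_def algebra_simps)
    ultimately show "((\<lambda>z. U z - Re (G z)) has_derivative (\<lambda>h. 0)) (at z within S)"
      by (simp add: has_derivative_at_withinI)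
  qed
  then obtain c where "\<And>z. z \<in> S \<Longrightarrow> U z - Re (G z) = c"
    by blast
  then have c: "\<And>z. z \<in> S \<Longrightarrow> U z = Re (G z + complex_of_real c)"
    by force
  have "G holomorphic_on S"
    using G \<open>open S\<close> by (auto simp: holomorphic_on_open field_differentiable_def)
  then have "(\<lambda>z. G z + complex_of_real c) holomorphic_on S"
    by (intro holomorphic_intros)
  then show ?thesis using c by (rule that)
qed

lemma harmonic_on_imp_continuous_on:
  assumes "harmonic_on U S"
  shows "continuous_on S U"
  using assms unfolding harmonic_on_def
  by (meson continuous_at_imp_continuous_on has_derivative_continuous)

lemma dist_circlepath [simp]: "dist z (circlepath z r t) = \<bar>r\<bar>"
  by (simp add: circlepath dist_norm norm_mult)

lemma holomorphic_on_circle_mean: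
  assumes "F holomorphic_on S" "cball z r \<subseteq> S" "r > 0"
  shows "((\<lambda>t. F (circlepath z r t)) has_integral F z) {0..1}"
proof -
  have "continuous_on (cball z r) F" "F holomorphic_on ball z r"
    using assms(1,2) holomorphic_on_subset holomorphic_on_imp_continuous_on ball_subset_cball
    by blast+
  then have "((\<lambda>u. F u / (u - z)) has_contour_integral (2 * of_real pi * \<i> * F z)) (circlepath z r)"
    using \<open>r > 0\<close> by (intro Cauchy_integral_circlepath) auto
  then have I: "((\<lambda>t. F (circlepath z r t) / (circlepath z r t - z)
      * vector_derivative (circlepath z r) (at t within {0..1})) has_integral (2 * of_real pi * \<i> * F z)) {0..1}"
    unfolding has_contour_integral_def .
  have "((\<lambda>t. 2 * of_real pi * \<i> * F (circlepath z r t)) has_integral (2 * of_real pi * \<i> * F z)) {0..1}"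
  proof (rule has_integral_spike_finite[OF finite.emptyI _ I])
    fix t :: real assume "t \<in> {0..1} - {}"
    then have "vector_derivative (circlepath z r) (at t within {0..1})
        = 2 * pi * \<i> * r * exp (2 * of_real pi * \<i> * t)"
      by (intro vector_derivative_circlepath01) auto
    then show "2 * of_real pi * \<i> * F (circlepath z r t) = F (circlepath z r t) / (circlepath z r t - z)
        * vector_derivative (circlepath z r) (at t within {0..1})"
      using \<open>r > 0\<close> by (simp add: circlepath field_simps)
  qed
  from has_integral_mult_right[OF this, of "inverse (2 * of_real pi * \<i>)"]
  show ?thesis by (simp add: field_simps)
qed

lemma harmonic_on_circle_mean:
  assumes "harmonic_on U S" "convex S" "cball z r \<subseteq> S" "r > 0"
  shows "((\<lambda>t. U (circlepath z r t)) has_integral U z) {0..1}"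
proof -
  obtain F where "F holomorphic_on S" and U: "\<And>z. z \<in> S \<Longrightarrow> U z = Re (F z)"
    using harmonic_on_convex_imp_Re_holomorphic[OF assms(1,2)] by blast
  have "((\<lambda>t. Re (F (circlepath z r t))) has_integral Re (F z)) {0..1}"
    using has_integral_linear[OF holomorphic_on_circle_mean[OF \<open>F holomorphic_on S\<close> assms(3,4)]
        bounded_linear_Re]
    by (simp add: o_def)
  moreover have "circlepath z r t \<in> S" for t
    using assms(3,4) by (auto simp: subset_iff)
  moreover have "z \<in> S" using assms(3,4) by auto
  ultimately show ?thesis by (simp add: U)
qed

lemma harmonic_on_abs_le_circle_mean:
  assumes "harmonic_on U S" "convex S" "cball z r \<subseteq> S" "r > 0"
  shows "ennreal \<bar>U z\<bar> \<le> (\<integral>\<^sup>+t. ennreal \<bar>U (circlepath z r t)\<bar> * indicator {0..1} t \<partial>lborel)"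
proof -
  note mean = harmonic_on_circle_mean[OF assms]
  have "circlepath z r ` {0..1} \<subseteq> S"
    using assms(3,4) by (auto simp: subset_iff)
  moreover have "continuous_on {0..1} (circlepath z r)"
    using path_circlepath unfolding path_def .
  ultimately have "continuous_on {0..1} (\<lambda>t. U (circlepath z r t))"
    using harmonic_on_imp_continuous_on[OF assms(1)] continuous_on_compose2 by blast
  then have int: "(\<lambda>t. \<bar>U (circlepath z r t)\<bar>) integrable_on {0..1}"
    by (intro integrable_continuous_interval continuous_intros)
  have "\<bar>U z\<bar> = norm (integral {0..1} (\<lambda>t. U (circlepath z r t)))"
    using mean by (simp add: integral_unique)
  also have "\<dots> \<le> integral {0..1} (\<lambda>t. \<bar>U (circlepath z r t)\<bar>)"
    using mean int by (intro integral_norm_bound_integral) auto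
  also have "ennreal \<dots> = (\<integral>\<^sup>+t. ennreal \<bar>U (circlepath z r t)\<bar> * indicator {0..1} t \<partial>lborel)"
    using int by (intro nn_integral_has_integral_lebesgue'[symmetric]) auto
  finally show ?thesis by (simp add: ennreal_leI)
qed

section \<open>Circle integrals and horizontal segments\<close>

lemma borel_measurable_Complex [measurable]:
  assumes [measurable]: "f \<in> borel_measurable M" "g \<in> borel_measurable M"
  shows "(\<lambda>x. Complex (f x) (g x)) \<in> borel_measurable M"
proof -
  have "(\<lambda>x. complex_of_real (f x) + \<i> * complex_of_real (g x)) \<in> borel_measurable M"
    by measurable
  then show ?thesis by (simp add: Complex_eq)
qed

lemma pred_in_atLeastAtMost [measurable]:
  fixes f g h :: "'a \<Rightarrow> real"
  assumes [measurable]: "f \<in> borel_measurable M" "g \<in> borel_measurable M" "h \<in> borel_measurable M"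
  shows "Measurable.pred M (\<lambda>x. f x \<in> {g x..h x})"
  by simp

lemma nn_integral_substitution_interior:
  fixes f g g' h :: "real \<Rightarrow> real"
  assumes [measurable]: "f \<in> borel_measurable borel"
    and "\<And>t. t \<in> {a..b} \<Longrightarrow> (g has_real_derivative g' t) (at t)"
    and "continuous_on {a..b} g'" "\<And>t. t \<in> {a..b} \<Longrightarrow> g' t \<ge> 0" "a \<le> b"
    and h: "\<And>t. t \<in> {a<..<b} \<Longrightarrow> h t = f (g t) * g' t"
  shows "(\<integral>\<^sup>+t. ennreal (h t) * indicator {a..b} t \<partial>lborel)
       = (\<integral>\<^sup>+x. ennreal (f x) * indicator {g a..g b} x \<partial>lborel)"
proof -
  have "(\<integral>\<^sup>+t. ennreal (h t) * indicator {a..b} t \<partial>lborel)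
      = (\<integral>\<^sup>+t. f (g t) * g' t * indicator {a..b} t \<partial>lborel)"
  proof (rule nn_integral_cong_AE)
    show "AE t in lborel. ennreal (h t) * indicator {a..b} t = ennreal (f (g t) * g' t * indicator {a..b} t)"
      using AE_lborel_singleton[of a] AE_lborel_singleton[of b]
      by eventually_elim (auto simp: h split: split_indicator)
  qed
  also have "\<dots> = (\<integral>\<^sup>+x. f x * indicator {g a..g b} x \<partial>lborel)"
    by (rule nn_integral_substitution[symmetric]) (use assms in \<open>auto simp: set_borel_measurable_def\<close>)
  also have "\<dots> = (\<integral>\<^sup>+x. ennreal (f x) * indicator {g a..g b} x \<partial>lborel)"
    by (rule nn_integral_cong) (simp split: split_indicator)
  finally show ?thesis .
qed

lemma circlepath_Complex: "circlepath z r t = z + Complex (r * cos (2 * pi * t)) (r * sin (2 * pi * t))"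
  by (simp add: circlepath complex_eq_iff Re_exp Im_exp)

lemma sqrt_sq_minus_cos_sq: "r \<ge> 0 \<Longrightarrow> sqrt (r\<^sup>2 - (r * cos u)\<^sup>2) = r * \<bar>sin u\<bar>"
proof -
  have "r\<^sup>2 - (r * cos u)\<^sup>2 = (r * sin u)\<^sup>2"
    by (simp add: power_mult_distrib sin_squared_eq algebra_simps)
  then show "r \<ge> 0 \<Longrightarrow> ?thesis" by (simp add: abs_mult)
qed

text \<open>Each half of the circle is parametrised by the abscissa \<open>x\<close>, with
  \<open>dt = dx / (2 \<pi> sqrt (r\<^sup>2 - x\<^sup>2))\<close>.\<close>

lemma nn_integral_circlepath_upper_half:
  fixes G :: "complex \<Rightarrow> real"
  assumes [measurable]: "G \<in> borel_measurable borel" and "r > 0"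
  shows "(\<integral>\<^sup>+t. ennreal (G (circlepath z r t)) * indicator {0..1/2} t \<partial>lborel)
    = (\<integral>\<^sup>+x. ennreal (G (z + Complex (-x) (sqrt (r\<^sup>2 - x\<^sup>2))) / (2 * pi * sqrt (r\<^sup>2 - x\<^sup>2)))
         * indicator {-r..r} x \<partial>lborel)"
proof (subst nn_integral_substitution_interior[where g = "\<lambda>t. - r * cos (2 * pi * t)"
      and g' = "\<lambda>t. 2 * pi * r * sin (2 * pi * t)"])
  fix t :: real assume "t \<in> {0..1/2}"
  then have "sin (2 * pi * t) \<ge> 0" by (intro sin_ge_zero) auto
  then show "0 \<le> 2 * pi * r * sin (2 * pi * t)"
    using \<open>r > 0\<close> by simp
next
  fix t :: real assume "t \<in> {0<..<1/2}"
  then have "sin (2 * pi * t) > 0" by (intro sin_gt_zero) auto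
  then show "G (circlepath z r t) = G (z + Complex (- (- r * cos (2 * pi * t))) (sqrt (r\<^sup>2 - (- r * cos (2 * pi * t))\<^sup>2)))
      / (2 * pi * sqrt (r\<^sup>2 - (- r * cos (2 * pi * t))\<^sup>2)) * (2 * pi * r * sin (2 * pi * t))"
    using \<open>r > 0\<close> sqrt_sq_minus_cos_sq[of r "2 * pi * t"] by (simp add: circlepath_Complex)
qed (auto intro!: derivative_eq_intros continuous_intros)

lemma nn_integral_circlepath_lower_half:
  fixes G :: "complex \<Rightarrow> real"
  assumes [measurable]: "G \<in> borel_measurable borel" and "r > 0"
  shows "(\<integral>\<^sup>+t. ennreal (G (circlepath z r t)) * indicator {1/2..1} t \<partial>lborel)
    = (\<integral>\<^sup>+x. ennreal (G (z + Complex x (- sqrt (r\<^sup>2 - x\<^sup>2))) / (2 * pi * sqrt (r\<^sup>2 - x\<^sup>2)))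
         * indicator {-r..r} x \<partial>lborel)"
proof (subst nn_integral_substitution_interior[where g = "\<lambda>t. r * cos (2 * pi * t)"
      and g' = "\<lambda>t. - (2 * pi * r * sin (2 * pi * t))"])
  fix t :: real assume "t \<in> {1/2..1}"
  then have "sin (2 * pi * t - pi) \<ge> 0" by (intro sin_ge_zero) auto
  then show "0 \<le> - (2 * pi * r * sin (2 * pi * t))"
    using \<open>r > 0\<close> by (simp add: sin_diff mult_nonneg_nonpos)
next
  fix t :: real assume "t \<in> {1/2<..<1}"
  then have "sin (2 * pi * t - pi) > 0" by (intro sin_gt_zero) auto
  then have "sin (2 * pi * t) < 0" by (simp add: sin_diff)
  then show "G (circlepath z r t) = G (z + Complex (r * cos (2 * pi * t)) (- sqrt (r\<^sup>2 - (r * cos (2 * pi * t))\<^sup>2)))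
      / (2 * pi * sqrt (r\<^sup>2 - (r * cos (2 * pi * t))\<^sup>2)) * (- (2 * pi * r * sin (2 * pi * t)))"
    using \<open>r > 0\<close> sqrt_sq_minus_cos_sq[of r "2 * pi * t"] by (simp add: circlepath_Complex)
qed (auto intro!: derivative_eq_intros continuous_intros)

lemma nn_integral_circlepath_le:
  fixes G :: "complex \<Rightarrow> real"
  assumes G_meas [measurable]: "G \<in> borel_measurable borel" and G_nonneg: "\<And>w. G w \<ge> 0" and "r > 0"
  shows "(\<integral>\<^sup>+t. ennreal (G (circlepath z r t)) * indicator {0..1} t \<partial>lborel)
    \<le> (\<integral>\<^sup>+x. ennreal ((G (z + Complex (-x) (sqrt (r\<^sup>2 - x\<^sup>2))) + G (z + Complex x (- sqrt (r\<^sup>2 - x\<^sup>2))))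
          / (2 * pi * sqrt (r\<^sup>2 - x\<^sup>2))) * indicator {-r..r} x \<partial>lborel)"
proof -
  define upper where "upper x = G (z + Complex (-x) (sqrt (r\<^sup>2 - x\<^sup>2))) / (2 * pi * sqrt (r\<^sup>2 - x\<^sup>2))" for x
  define lower where "lower x = G (z + Complex x (- sqrt (r\<^sup>2 - x\<^sup>2))) / (2 * pi * sqrt (r\<^sup>2 - x\<^sup>2))" for x
  have "(\<integral>\<^sup>+t. ennreal (G (circlepath z r t)) * indicator {0..1} t \<partial>lborel)
      \<le> (\<integral>\<^sup>+t. ennreal (G (circlepath z r t)) * indicator {0..1/2} t
           + ennreal (G (circlepath z r t)) * indicator {1/2..1} t \<partial>lborel)"
    by (rule nn_integral_mono) (auto split: split_indicator)
  also have "\<dots> = (\<integral>\<^sup>+t. ennreal (G (circlepath z r t)) * indicator {0..1/2} t \<partial>lborel)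
      + (\<integral>\<^sup>+t. ennreal (G (circlepath z r t)) * indicator {1/2..1} t \<partial>lborel)"
    by (intro nn_integral_add) (auto simp: circlepath_Complex)
  also have "\<dots> = (\<integral>\<^sup>+x. ennreal (upper x) * indicator {-r..r} x + ennreal (lower x) * indicator {-r..r} x \<partial>lborel)"
    unfolding nn_integral_circlepath_upper_half[OF G_meas \<open>r > 0\<close>]
      nn_integral_circlepath_lower_half[OF G_meas \<open>r > 0\<close>] upper_def lower_def
    by (intro nn_integral_add[symmetric]) auto
  also have "\<dots> = (\<integral>\<^sup>+x. ennreal ((G (z + Complex (-x) (sqrt (r\<^sup>2 - x\<^sup>2))) + G (z + Complex x (- sqrt (r\<^sup>2 - x\<^sup>2))))
          / (2 * pi * sqrt (r\<^sup>2 - x\<^sup>2))) * indicator {-r..r} x \<partial>lborel)"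
  proof (intro nn_integral_cong)
    fix x :: real
    have "upper x \<ge> 0" "lower x \<ge> 0" if "x \<in> {-r..r}"
    proof -
      from that have "x\<^sup>2 \<le> r\<^sup>2" by (simp add: abs_le_square_iff[symmetric] abs_le_iff)
      then show "upper x \<ge> 0" "lower x \<ge> 0"
        by (simp_all add: upper_def lower_def G_nonneg)
    qed
    then show "ennreal (upper x) * indicator {-r..r} x + ennreal (lower x) * indicator {-r..r} x
      = ennreal ((G (z + Complex (-x) (sqrt (r\<^sup>2 - x\<^sup>2))) + G (z + Complex x (- sqrt (r\<^sup>2 - x\<^sup>2))))
          / (2 * pi * sqrt (r\<^sup>2 - x\<^sup>2))) * indicator {-r..r} x"
      by (auto simp: add_divide_distrib ennreal_plus upper_def lower_def split: split_indicator)
  qed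
  finally show ?thesis .
qed

lemma nn_integral_radius_substitution:
  fixes k :: "real \<Rightarrow> real"
  assumes [measurable]: "k \<in> borel_measurable borel" and "\<bar>x\<bar> \<le> m" "m \<le> R" "m > 0"
  shows "(\<integral>\<^sup>+r. ennreal (k (sqrt (r\<^sup>2 - x\<^sup>2)) / (2 * pi * sqrt (r\<^sup>2 - x\<^sup>2))) * indicator {m..R} r \<partial>lborel)
    = (\<integral>\<^sup>+y. ennreal (k y / (2 * pi * sqrt (x\<^sup>2 + y\<^sup>2))) * indicator {sqrt (m\<^sup>2 - x\<^sup>2)..sqrt (R\<^sup>2 - x\<^sup>2)} y \<partial>lborel)"
proof -
  define a where "a = sqrt (m\<^sup>2 - x\<^sup>2)"
  define b where "b = sqrt (R\<^sup>2 - x\<^sup>2)"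
  have "x\<^sup>2 \<le> m\<^sup>2" "m\<^sup>2 \<le> R\<^sup>2"
    using assms(2-4) by (auto simp: abs_le_square_iff[symmetric] intro: power_mono)
  then have "x\<^sup>2 \<le> R\<^sup>2" "a \<ge> 0" "a \<le> b" by (auto simp: a_def b_def)
  have norm_ge: "x\<^sup>2 + y\<^sup>2 \<ge> m\<^sup>2" if "y \<in> {a..b}" for y
  proof -
    have "a\<^sup>2 \<le> y\<^sup>2" using that \<open>a \<ge> 0\<close> by (auto intro!: power_mono)
    then show ?thesis using \<open>x\<^sup>2 \<le> m\<^sup>2\<close> by (simp add: a_def)
  qed
  then have norm_pos: "sqrt (x\<^sup>2 + y\<^sup>2) > 0" if "y \<in> {a..b}" for y
    using that \<open>m > 0\<close> by (smt (verit) real_sqrt_gt_zero zero_less_power)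
  have "(\<integral>\<^sup>+y. ennreal (k y / (2 * pi * sqrt (x\<^sup>2 + y\<^sup>2))) * indicator {a..b} y \<partial>lborel)
    = (\<integral>\<^sup>+r. ennreal (k (sqrt (r\<^sup>2 - x\<^sup>2)) / (2 * pi * sqrt (r\<^sup>2 - x\<^sup>2)))
         * indicator {sqrt (x\<^sup>2 + a\<^sup>2)..sqrt (x\<^sup>2 + b\<^sup>2)} r \<partial>lborel)"
  proof (rule nn_integral_substitution_interior[where g = "\<lambda>y. sqrt (x\<^sup>2 + y\<^sup>2)"
        and g' = "\<lambda>y. y / sqrt (x\<^sup>2 + y\<^sup>2)"])
    show "((\<lambda>y. sqrt (x\<^sup>2 + y\<^sup>2)) has_real_derivative y / sqrt (x\<^sup>2 + y\<^sup>2)) (at y)"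
      if "y \<in> {a..b}" for y
      using norm_pos[OF that] by (auto intro!: derivative_eq_intros simp: field_simps)
    show "continuous_on {a..b} (\<lambda>y. y / sqrt (x\<^sup>2 + y\<^sup>2))"
      using norm_pos by (intro continuous_intros ballI) (metis less_irrefl)
    show "k y / (2 * pi * sqrt (x\<^sup>2 + y\<^sup>2))
        = k (sqrt ((sqrt (x\<^sup>2 + y\<^sup>2))\<^sup>2 - x\<^sup>2)) / (2 * pi * sqrt ((sqrt (x\<^sup>2 + y\<^sup>2))\<^sup>2 - x\<^sup>2))
          * (y / sqrt (x\<^sup>2 + y\<^sup>2))"
      if "y \<in> {a<..<b}" for y
      using that \<open>a \<ge> 0\<close> norm_pos[of y] by (simp add: field_simps)
  qed (use \<open>a \<ge> 0\<close> \<open>a \<le> b\<close> in auto)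
  moreover have "sqrt (x\<^sup>2 + a\<^sup>2) = m" "sqrt (x\<^sup>2 + b\<^sup>2) = R"
    using \<open>x\<^sup>2 \<le> m\<^sup>2\<close> \<open>x\<^sup>2 \<le> R\<^sup>2\<close> assms(3,4) by (simp_all add: a_def b_def)
  ultimately show ?thesis by (simp add: a_def b_def)
qed

lemma nn_integral_radius_le_height:
  fixes k :: "real \<Rightarrow> real"
  assumes [measurable]: "k \<in> borel_measurable borel" and k_nonneg: "\<And>y. k y \<ge> 0" and "R > 0"
  shows "(\<integral>\<^sup>+r. indicator {R/2..R} r
        * (ennreal (k (sqrt (r\<^sup>2 - x\<^sup>2)) / (2 * pi * sqrt (r\<^sup>2 - x\<^sup>2))) * indicator {-r..r} x) \<partial>lborel)
    \<le> indicator {-R..R} x * (ennreal (1 / (pi * R)) * (\<integral>\<^sup>+y. ennreal (k y) * indicator {0..R} y \<partial>lborel))"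
proof (cases "\<bar>x\<bar> \<le> R")
  case False
  then have "(\<lambda>r. indicator {R/2..R} r * (ennreal (k (sqrt (r\<^sup>2 - x\<^sup>2)) / (2 * pi * sqrt (r\<^sup>2 - x\<^sup>2)))
      * indicator {-r..r} x)) = (\<lambda>r. 0)"
    by (intro ext) (auto split: split_indicator)
  then show ?thesis by simp
next
  case True
  define m where "m = max \<bar>x\<bar> (R/2)"
  have m: "\<bar>x\<bar> \<le> m" "m \<le> R" "m > 0" "R / 2 \<le> m"
    using True \<open>R > 0\<close> by (auto simp: m_def)
  define a where "a = sqrt (m\<^sup>2 - x\<^sup>2)"
  define b where "b = sqrt (R\<^sup>2 - x\<^sup>2)"
  have "(\<integral>\<^sup>+r. indicator {R/2..R} r
        * (ennreal (k (sqrt (r\<^sup>2 - x\<^sup>2)) / (2 * pi * sqrt (r\<^sup>2 - x\<^sup>2))) * indicator {-r..r} x) \<partial>lborel)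
      = (\<integral>\<^sup>+r. ennreal (k (sqrt (r\<^sup>2 - x\<^sup>2)) / (2 * pi * sqrt (r\<^sup>2 - x\<^sup>2))) * indicator {m..R} r \<partial>lborel)"
    using True by (intro nn_integral_cong) (auto simp: m_def split: split_indicator)
  also have "\<dots> = (\<integral>\<^sup>+y. ennreal (k y / (2 * pi * sqrt (x\<^sup>2 + y\<^sup>2))) * indicator {a..b} y \<partial>lborel)"
    unfolding a_def b_def using m by (intro nn_integral_radius_substitution) auto
  also have "\<dots> \<le> (\<integral>\<^sup>+y. ennreal (1 / (pi * R)) * (ennreal (k y) * indicator {0..R} y) \<partial>lborel)"
  proof (intro nn_integral_mono)
    fix y :: real
    show "ennreal (k y / (2 * pi * sqrt (x\<^sup>2 + y\<^sup>2))) * indicator {a..b} y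
        \<le> ennreal (1 / (pi * R)) * (ennreal (k y) * indicator {0..R} y)"
    proof (cases "y \<in> {a..b}")
      case True
      have "x\<^sup>2 \<le> m\<^sup>2" using m by (simp add: abs_le_square_iff[symmetric])
      then have "0 \<le> a" "a\<^sup>2 = m\<^sup>2 - x\<^sup>2" by (simp_all add: a_def)
      moreover have "a\<^sup>2 \<le> y\<^sup>2" using True \<open>0 \<le> a\<close> by (auto intro!: power_mono)
      ultimately have "m\<^sup>2 \<le> x\<^sup>2 + y\<^sup>2" by simp
      then have "R / 2 \<le> sqrt (x\<^sup>2 + y\<^sup>2)"
        using m by (metis order_trans real_sqrt_le_mono real_sqrt_abs abs_of_pos)
      moreover from this have "sqrt (x\<^sup>2 + y\<^sup>2) > 0" using \<open>R > 0\<close> by linarith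
      ultimately have "k y / (2 * pi * sqrt (x\<^sup>2 + y\<^sup>2)) \<le> k y / (pi * R)"
        using k_nonneg[of y] \<open>R > 0\<close> by (intro divide_left_mono mult_pos_pos) auto
      moreover have "b \<le> R"
        using \<open>R > 0\<close> real_sqrt_le_mono[of "R\<^sup>2 - x\<^sup>2" "R\<^sup>2"] by (simp add: b_def)
      ultimately show ?thesis
        using True \<open>0 \<le> a\<close> by (simp add: ennreal_mult'[symmetric] ennreal_leI)
    qed simp
  qed
  also have "\<dots> = ennreal (1 / (pi * R)) * (\<integral>\<^sup>+y. ennreal (k y) * indicator {0..R} y \<partial>lborel)"
    by (rule nn_integral_cmult) measurable
  finally show ?thesis using True by (simp add: abs_le_iff)
qed

text \<open>Fubini in the coordinates \<open>(r, x)\<close>, then the substitution \<open>r = sqrt (x\<^sup>2 + y\<^sup>2)\<close> in the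
  inner integral: polar coordinates without a two-dimensional change of variables.\<close>

lemma nn_integral_annulus_le_square:
  fixes G :: "complex \<Rightarrow> real"
  assumes G_meas [measurable]: "G \<in> borel_measurable borel" and G_nonneg: "\<And>w. G w \<ge> 0"
    and "R > 0"
  shows "(\<integral>\<^sup>+r. indicator {R/2..R} r * (\<integral>\<^sup>+t. ennreal (G (circlepath z r t)) * indicator {0..1} t \<partial>lborel) \<partial>lborel)
    \<le> ennreal (1 / (pi * R)) * (\<integral>\<^sup>+y. indicator {0..R} y
          * (\<integral>\<^sup>+x. ennreal (G (z + Complex (-x) y) + G (z + Complex x (-y))) * indicator {-R..R} x \<partial>lborel) \<partial>lborel)"
proof -
  define K where "K x y = G (z + Complex (-x) y) + G (z + Complex x (-y))" for x y
  have K_nonneg: "K x y \<ge> 0" for x y by (simp add: K_def G_nonneg)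
  define Q where "Q x r = ennreal (K x (sqrt (r\<^sup>2 - x\<^sup>2)) / (2 * pi * sqrt (r\<^sup>2 - x\<^sup>2))) * indicator {-r..r} x"
    for x r
  have [measurable]: "(\<lambda>(x, y). K x y) \<in> borel_measurable (lborel \<Otimes>\<^sub>M lborel)"
    "(\<lambda>y. K x y) \<in> borel_measurable borel" for x
    unfolding K_def by measurable
  have [measurable]: "(\<lambda>(r, x). indicator {R/2..R} r * Q x r) \<in> borel_measurable (lborel \<Otimes>\<^sub>M lborel)"
    unfolding Q_def K_def by measurable
  have "(\<integral>\<^sup>+r. indicator {R/2..R} r * (\<integral>\<^sup>+t. ennreal (G (circlepath z r t)) * indicator {0..1} t \<partial>lborel) \<partial>lborel)
      \<le> (\<integral>\<^sup>+r. indicator {R/2..R} r * (\<integral>\<^sup>+x. Q x r \<partial>lborel) \<partial>lborel)"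
  proof (intro nn_integral_mono)
    fix r :: real
    show "indicator {R/2..R} r * (\<integral>\<^sup>+t. ennreal (G (circlepath z r t)) * indicator {0..1} t \<partial>lborel)
        \<le> indicator {R/2..R} r * (\<integral>\<^sup>+x. Q x r \<partial>lborel)"
    proof (cases "r \<in> {R/2..R}")
      case True
      then have "r > 0" using \<open>R > 0\<close> by auto
      from nn_integral_circlepath_le[OF G_meas G_nonneg this, of z] show ?thesis
        by (simp add: Q_def K_def mult_left_mono)
    qed simp
  qed
  also have "\<dots> = (\<integral>\<^sup>+r. (\<integral>\<^sup>+x. indicator {R/2..R} r * Q x r \<partial>lborel) \<partial>lborel)"
    by (intro nn_integral_cong nn_integral_cmult[symmetric]) (unfold Q_def K_def, measurable)
  also have "\<dots> = (\<integral>\<^sup>+x. (\<integral>\<^sup>+r. indicator {R/2..R} r * Q x r \<partial>lborel) \<partial>lborel)"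
    by (rule lborel_pair.Fubini'[symmetric]) measurable
  also have "\<dots> \<le> (\<integral>\<^sup>+x. indicator {-R..R} x
      * (ennreal (1 / (pi * R)) * (\<integral>\<^sup>+y. ennreal (K x y) * indicator {0..R} y \<partial>lborel)) \<partial>lborel)"
    unfolding Q_def using K_nonneg \<open>R > 0\<close> by (intro nn_integral_mono nn_integral_radius_le_height) auto
  also have "\<dots> = (\<integral>\<^sup>+x. ennreal (1 / (pi * R))
      * (\<integral>\<^sup>+y. indicator {-R..R} x * (ennreal (K x y) * indicator {0..R} y) \<partial>lborel) \<partial>lborel)"
    by (intro nn_integral_cong) (simp add: nn_integral_cmult[symmetric] mult_ac)
  also have "\<dots> = ennreal (1 / (pi * R))
      * (\<integral>\<^sup>+x. (\<integral>\<^sup>+y. indicator {-R..R} x * (ennreal (K x y) * indicator {0..R} y) \<partial>lborel) \<partial>lborel)"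
    by (rule nn_integral_cmult) measurable
  also have "(\<integral>\<^sup>+x. (\<integral>\<^sup>+y. indicator {-R..R} x * (ennreal (K x y) * indicator {0..R} y) \<partial>lborel) \<partial>lborel)
      = (\<integral>\<^sup>+y. (\<integral>\<^sup>+x. indicator {-R..R} x * (ennreal (K x y) * indicator {0..R} y) \<partial>lborel) \<partial>lborel)"
    by (rule lborel_pair.Fubini') measurable
  also have "\<dots> = (\<integral>\<^sup>+y. indicator {0..R} y * (\<integral>\<^sup>+x. ennreal (K x y) * indicator {-R..R} x \<partial>lborel) \<partial>lborel)"
    by (intro nn_integral_cong) (simp add: nn_integral_cmult[symmetric] mult_ac)
  finally show ?thesis by (simp add: K_def)
qed

section \<open>Harmonic functions in the half plane\<close>

lemma convex_upper_half_plane: "convex upper_half_plane"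
  by (simp add: upper_half_plane_def convex_halfspace_Im_gt)

lemma cball_subset_upper_half_plane: "r < Im z \<Longrightarrow> cball z r \<subseteq> upper_half_plane"
proof
  fix w assume "r < Im z" "w \<in> cball z r"
  then have "\<bar>Im (z - w)\<bar> \<le> r" using abs_Im_le_cmod[of "z - w"] by (simp add: dist_norm)
  with \<open>r < Im z\<close> show "w \<in> upper_half_plane" by (simp add: upper_half_plane_def)
qed

lemma harmonic_on_abs_le_annulus_mean:
  assumes "harmonic_on U S" "convex S" "cball z R \<subseteq> S" "R > 0"
  shows "ennreal (\<bar>U z\<bar> * (R / 2))
    \<le> (\<integral>\<^sup>+r. indicator {R/2..R} r * (\<integral>\<^sup>+t. ennreal \<bar>U (circlepath z r t)\<bar> * indicator {0..1} t \<partial>lborel) \<partial>lborel)"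
proof -
  have "ennreal (\<bar>U z\<bar> * (R / 2)) = ennreal \<bar>U z\<bar> * ennreal (R / 2)"
    by (rule ennreal_mult') simp
  also have "\<dots> = (\<integral>\<^sup>+r. ennreal \<bar>U z\<bar> * indicator {R/2..R} r \<partial>lborel)"
    using \<open>R > 0\<close> by (simp add: nn_integral_cmult_indicator)
  also have "\<dots> \<le> (\<integral>\<^sup>+r. indicator {R/2..R} r
      * (\<integral>\<^sup>+t. ennreal \<bar>U (circlepath z r t)\<bar> * indicator {0..1} t \<partial>lborel) \<partial>lborel)"
  proof (intro nn_integral_mono)
    fix r :: real
    have "ennreal \<bar>U z\<bar> \<le> (\<integral>\<^sup>+t. ennreal \<bar>U (circlepath z r t)\<bar> * indicator {0..1} t \<partial>lborel)"
      if "r \<in> {R/2..R}"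
      using that assms by (intro harmonic_on_abs_le_circle_mean[OF assms(1,2)]) auto
    then show "ennreal \<bar>U z\<bar> * indicator {R/2..R} r
      \<le> indicator {R/2..R} r * (\<integral>\<^sup>+t. ennreal \<bar>U (circlepath z r t)\<bar> * indicator {0..1} t \<partial>lborel)"
      by (simp add: mult_left_mono split: split_indicator)
  qed
  finally show ?thesis .
qed

lemma harmonic_on_indicator_abs_measurable:
  assumes "harmonic_on U S"
  shows "(\<lambda>w. indicator S w * \<bar>U w\<bar>) \<in> borel_measurable borel"
proof -
  have "(\<lambda>w. indicator S w *\<^sub>R \<bar>U w\<bar>) \<in> borel_measurable borel"
    using assms harmonic_on_imp_continuous_on[OF assms]
    by (intro borel_measurable_continuous_on_indicator) (auto simp: harmonic_on_def intro!: continuous_intros)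
  then show ?thesis by simp
qed

text \<open>Extending \<open>\<bar>U\<bar>\<close> by zero outside the half plane gives a function on all of \<open>\<complex>\<close> to which
  the Fubini argument applies; the annulus and the segments stay inside the half plane.\<close>

lemma harmonic_on_abs_le_square_integral:
  assumes "harmonic_on U upper_half_plane" "R > 0" "R < Im z"
  shows "ennreal (\<bar>U z\<bar> * (R / 2)) \<le> ennreal (1 / (pi * R)) * (\<integral>\<^sup>+y. indicator {0..R} y
      * (\<integral>\<^sup>+x. ennreal (\<bar>U (z + Complex (-x) y)\<bar> + \<bar>U (z + Complex x (-y))\<bar>) * indicator {-R..R} x \<partial>lborel) \<partial>lborel)"
proof -
  define G where "G w = indicator upper_half_plane w * \<bar>U w\<bar>" for w
  have [measurable]: "G \<in> borel_measurable borel"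
    unfolding G_def[abs_def] by (rule harmonic_on_indicator_abs_measurable[OF assms(1)])
  have G: "G w = \<bar>U w\<bar>" if "Im w > 0" for w
    using that by (simp add: G_def upper_half_plane_def)
  have "ennreal (\<bar>U z\<bar> * (R / 2))
      \<le> (\<integral>\<^sup>+r. indicator {R/2..R} r * (\<integral>\<^sup>+t. ennreal \<bar>U (circlepath z r t)\<bar> * indicator {0..1} t \<partial>lborel) \<partial>lborel)"
    using cball_subset_upper_half_plane[OF assms(3)] \<open>R > 0\<close>
    by (intro harmonic_on_abs_le_annulus_mean[OF assms(1) convex_upper_half_plane])
  also have "\<dots> = (\<integral>\<^sup>+r. indicator {R/2..R} r
      * (\<integral>\<^sup>+t. ennreal (G (circlepath z r t)) * indicator {0..1} t \<partial>lborel) \<partial>lborel)"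
  proof (intro nn_integral_cong)
    fix r :: real
    have "circlepath z r t \<in> upper_half_plane" if "r \<in> {R/2..R}" for t
      using cball_subset_upper_half_plane[OF assms(3)] that \<open>R > 0\<close> by (auto simp: subset_iff)
    then show "indicator {R/2..R} r * (\<integral>\<^sup>+t. ennreal \<bar>U (circlepath z r t)\<bar> * indicator {0..1} t \<partial>lborel)
      = indicator {R/2..R} r * (\<integral>\<^sup>+t. ennreal (G (circlepath z r t)) * indicator {0..1} t \<partial>lborel)"
      by (simp add: G_def split: split_indicator)
  qed
  also have "\<dots> \<le> ennreal (1 / (pi * R)) * (\<integral>\<^sup>+y. indicator {0..R} y
      * (\<integral>\<^sup>+x. ennreal (G (z + Complex (-x) y) + G (z + Complex x (-y))) * indicator {-R..R} x \<partial>lborel) \<partial>lborel)"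
    using \<open>R > 0\<close> by (intro nn_integral_annulus_le_square[OF \<open>G \<in> borel_measurable borel\<close>]) (auto simp: G_def)
  also have "(\<integral>\<^sup>+y. indicator {0..R} y
      * (\<integral>\<^sup>+x. ennreal (G (z + Complex (-x) y) + G (z + Complex x (-y))) * indicator {-R..R} x \<partial>lborel) \<partial>lborel)
    = (\<integral>\<^sup>+y. indicator {0..R} y
      * (\<integral>\<^sup>+x. ennreal (\<bar>U (z + Complex (-x) y)\<bar> + \<bar>U (z + Complex x (-y))\<bar>) * indicator {-R..R} x \<partial>lborel) \<partial>lborel)"
  proof (intro nn_integral_cong)
    fix y :: real
    have "G (z + Complex (-x) y) + G (z + Complex x (-y)) = \<bar>U (z + Complex (-x) y)\<bar> + \<bar>U (z + Complex x (-y))\<bar>"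
      if "y \<in> {0..R}" for x
      using that assms(2,3) by (simp add: G)
    then show "indicator {0..R} y
      * (\<integral>\<^sup>+x. ennreal (G (z + Complex (-x) y) + G (z + Complex x (-y))) * indicator {-R..R} x \<partial>lborel)
      = indicator {0..R} y
      * (\<integral>\<^sup>+x. ennreal (\<bar>U (z + Complex (-x) y)\<bar> + \<bar>U (z + Complex x (-y))\<bar>) * indicator {-R..R} x \<partial>lborel)"
      by (simp split: split_indicator)
  qed
  finally show ?thesis .
qed

lemma abs_le_one_plus_powr: "q \<ge> 1 \<Longrightarrow> \<bar>a :: real\<bar> \<le> 1 + \<bar>a\<bar> powr q"
proof (cases "\<bar>a\<bar> \<le> 1")
  case False
  assume "q \<ge> 1"
  then have "\<bar>a\<bar> powr 1 \<le> \<bar>a\<bar> powr q" using False by (intro powr_mono) auto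
  then show ?thesis using False by simp
qed (auto intro: add_increasing2)

lemma harmonic_on_horizontal_line_measurable:
  assumes "harmonic_on U upper_half_plane" "Y > 0"
  shows "(\<lambda>x. U (Complex x Y)) \<in> borel_measurable borel"
proof -
  have "continuous_on UNIV (\<lambda>x. Complex x Y)"
    unfolding Complex_eq by (intro continuous_intros)
  moreover have "(\<lambda>x. Complex x Y) ` UNIV \<subseteq> upper_half_plane"
    using \<open>Y > 0\<close> by (auto simp: upper_half_plane_def)
  ultimately have "continuous_on UNIV (\<lambda>x. U (Complex x Y))"
    using continuous_on_compose2[OF harmonic_on_imp_continuous_on[OF assms(1)]] by blast
  then show ?thesis by (rule borel_measurable_continuous_onI)
qed

lemma hp_var_horizontal_nn_integral_le:
  assumes "U \<in> hp_var p" "\<And>x. p x \<ge> 1" "p \<in> borel_measurable borel" "Y > 0" "\<bar>\<sigma>\<bar> = 1" "R \<ge> 0"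
  shows "(\<integral>\<^sup>+x. ennreal \<bar>U (Complex (c + \<sigma> * x) Y)\<bar> * indicator {-R..R} x \<partial>lborel)
    \<le> ennreal (2 * R) + (SUP y\<in>{0<..}. \<integral>\<^sup>+x. ennreal (\<bar>U (Complex x y)\<bar> powr p x) \<partial>lborel)"
proof -
  have [measurable]: "(\<lambda>x. U (Complex x Y)) \<in> borel_measurable borel" "p \<in> borel_measurable borel"
    using assms(1,3,4) by (auto simp: hp_var_def intro: harmonic_on_horizontal_line_measurable)
  define f where "f x = ennreal (\<bar>U (Complex x Y)\<bar> powr p x)" for x
  have [measurable]: "f \<in> borel_measurable borel" unfolding f_def by measurable
  have "(\<integral>\<^sup>+x. ennreal \<bar>U (Complex (c + \<sigma> * x) Y)\<bar> * indicator {-R..R} x \<partial>lborel)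
      \<le> (\<integral>\<^sup>+x. indicator {-R..R} x + f (c + \<sigma> * x) \<partial>lborel)"
  proof (rule nn_integral_mono)
    fix x :: real
    have "ennreal \<bar>U (Complex (c + \<sigma> * x) Y)\<bar> \<le> ennreal (1 + \<bar>U (Complex (c + \<sigma> * x) Y)\<bar> powr p (c + \<sigma> * x))"
      by (intro ennreal_leI abs_le_one_plus_powr assms(2))
    also have "\<dots> = 1 + f (c + \<sigma> * x)" by (simp add: f_def ennreal_plus)
    finally show "ennreal \<bar>U (Complex (c + \<sigma> * x) Y)\<bar> * indicator {-R..R} x \<le> indicator {-R..R} x + f (c + \<sigma> * x)"
      by (auto split: split_indicator)
  qed
  also have "\<dots> = ennreal (2 * R) + (\<integral>\<^sup>+x. f (c + \<sigma> * x) \<partial>lborel)"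
    using \<open>R \<ge> 0\<close> by (subst nn_integral_add) auto
  also have "(\<integral>\<^sup>+x. f (c + \<sigma> * x) \<partial>lborel) = (\<integral>\<^sup>+x. f x \<partial>lborel)"
    using nn_integral_real_affine[of f \<sigma> c] \<open>\<bar>\<sigma>\<bar> = 1\<close> by auto
  also have "\<dots> \<le> (SUP y\<in>{0<..}. \<integral>\<^sup>+x. ennreal (\<bar>U (Complex x y)\<bar> powr p x) \<partial>lborel)"
    unfolding f_def using \<open>Y > 0\<close> by (intro SUP_upper) auto
  finally show ?thesis by (simp add: add_left_mono)
qed

lemma hp_var_segment_pair_nn_integral_le:
  assumes "U \<in> hp_var p" "\<And>x. p x \<ge> 1" "p \<in> borel_measurable borel" "0 \<le> y" "y < Im z" "R \<ge> 0"
  shows "(\<integral>\<^sup>+x. ennreal (\<bar>U (z + Complex (-x) y)\<bar> + \<bar>U (z + Complex x (-y))\<bar>) * indicator {-R..R} x \<partial>lborel)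
    \<le> 2 * (ennreal (2 * R) + (SUP y\<in>{0<..}. \<integral>\<^sup>+x. ennreal (\<bar>U (Complex x y)\<bar> powr p x) \<partial>lborel))"
proof -
  have harm: "harmonic_on U upper_half_plane" using assms(1) by (simp add: hp_var_def)
  have [measurable]: "(\<lambda>x. U (Complex x (Im z + y))) \<in> borel_measurable borel"
    "(\<lambda>x. U (Complex x (Im z - y))) \<in> borel_measurable borel"
    using harmonic_on_horizontal_line_measurable[OF harm] assms(4,5) by auto
  have "z + Complex (-x) y = Complex (Re z + (-1) * x) (Im z + y)"
    "z + Complex x (-y) = Complex (Re z + 1 * x) (Im z - y)" for x
    by (simp_all add: complex_eq_iff)
  then have "(\<integral>\<^sup>+x. ennreal (\<bar>U (z + Complex (-x) y)\<bar> + \<bar>U (z + Complex x (-y))\<bar>) * indicator {-R..R} x \<partial>lborel)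
    = (\<integral>\<^sup>+x. ennreal \<bar>U (Complex (Re z + (-1) * x) (Im z + y))\<bar> * indicator {-R..R} x
        + ennreal \<bar>U (Complex (Re z + 1 * x) (Im z - y))\<bar> * indicator {-R..R} x \<partial>lborel)"
    by (intro nn_integral_cong) (simp add: ennreal_plus distrib_right)
  also have "\<dots> = (\<integral>\<^sup>+x. ennreal \<bar>U (Complex (Re z + (-1) * x) (Im z + y))\<bar> * indicator {-R..R} x \<partial>lborel)
      + (\<integral>\<^sup>+x. ennreal \<bar>U (Complex (Re z + 1 * x) (Im z - y))\<bar> * indicator {-R..R} x \<partial>lborel)"
    by (rule nn_integral_add) measurable
  also have "\<dots> \<le> (ennreal (2 * R) + (SUP y\<in>{0<..}. \<integral>\<^sup>+x. ennreal (\<bar>U (Complex x y)\<bar> powr p x) \<partial>lborel))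
      + (ennreal (2 * R) + (SUP y\<in>{0<..}. \<integral>\<^sup>+x. ennreal (\<bar>U (Complex x y)\<bar> powr p x) \<partial>lborel))"
    using assms(4,5,6) by (intro add_mono hp_var_horizontal_nn_integral_le[OF assms(1-3)]) auto
  finally show ?thesis by (simp only: mult_2)
qed

lemma hp_var_abs_le:
  assumes "U \<in> hp_var p" "\<And>x. p x \<ge> 1" "p \<in> borel_measurable borel"
    and M: "(SUP y\<in>{0<..}. \<integral>\<^sup>+x. ennreal (\<bar>U (Complex x y)\<bar> powr p x) \<partial>lborel) = ennreal M" "M \<ge> 0"
    and "k > 0" "k \<le> Im z"
  shows "\<bar>U z\<bar> \<le> 8 * (k + M) / (pi * k)"
proof -
  define R where "R = k / 2"
  have "R > 0" "R < Im z" using \<open>k > 0\<close> \<open>k \<le> Im z\<close> by (simp_all add: R_def)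
  have segments: "(\<integral>\<^sup>+x. ennreal (\<bar>U (z + Complex (-x) y)\<bar> + \<bar>U (z + Complex x (-y))\<bar>) * indicator {-R..R} x \<partial>lborel)
      \<le> ennreal (2 * (2 * R + M))" if "y \<in> {0..R}" for y
    using hp_var_segment_pair_nn_integral_le[OF assms(1-3), of y z R] that \<open>R > 0\<close> \<open>R < Im z\<close> \<open>M \<ge> 0\<close>
    by (simp add: M(1) numeral_mult_ennreal ennreal_plus[symmetric] del: ennreal_plus)
  have "ennreal (\<bar>U z\<bar> * (R / 2)) \<le> ennreal (1 / (pi * R)) * (\<integral>\<^sup>+y. indicator {0..R} y
      * (\<integral>\<^sup>+x. ennreal (\<bar>U (z + Complex (-x) y)\<bar> + \<bar>U (z + Complex x (-y))\<bar>) * indicator {-R..R} x \<partial>lborel) \<partial>lborel)"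
    by (rule harmonic_on_abs_le_square_integral) (use assms(1) \<open>R > 0\<close> \<open>R < Im z\<close> in \<open>simp_all add: hp_var_def\<close>)
  also have "\<dots> \<le> ennreal (1 / (pi * R)) * (\<integral>\<^sup>+y. ennreal (2 * (2 * R + M)) * indicator {0..R} y \<partial>lborel)"
    using segments by (intro mult_left_mono nn_integral_mono) (auto split: split_indicator)
  also have "\<dots> = ennreal (1 / (pi * R)) * (ennreal (2 * (2 * R + M)) * ennreal R)"
    using \<open>R > 0\<close> by (subst nn_integral_cmult_indicator) auto
  also have "\<dots> = ennreal (1 / (pi * R) * (2 * (2 * R + M) * R))"
  proof -
    have "0 \<le> 1 / (pi * R)" "0 \<le> 2 * (2 * R + M)" using \<open>R > 0\<close> \<open>M \<ge> 0\<close> by auto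
    then show ?thesis by (metis ennreal_mult')
  qed
  finally have "\<bar>U z\<bar> * (R / 2) \<le> 1 / (pi * R) * (2 * (2 * R + M) * R)"
    using \<open>R > 0\<close> \<open>M \<ge> 0\<close> by (subst (asm) ennreal_le_iff) auto
  then have "\<bar>U z\<bar> \<le> 1 / (pi * R) * (2 * (2 * R + M) * R) / (R / 2)"
    using \<open>R > 0\<close> by (simp add: pos_le_divide_eq mult_ac)
  also have "\<dots> = 8 * (k + M) / (pi * k)"
    using \<open>k > 0\<close> by (simp add: R_def field_simps)
  finally show ?thesis .
qed

theorem theorem4p3:
  fixes p :: "real \<Rightarrow> real" and U :: "complex \<Rightarrow> real"
  assumes "LH p"
    and "U \<in> hp_var p"
  shows "\<forall>k>0. bounded (U ` {z. Im z \<ge> k})"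
proof (intro allI impI)
  fix k :: real assume "k > 0"
  have p: "p \<in> borel_measurable borel" "\<And>x. p x \<ge> 1"
    using \<open>LH p\<close> by (auto simp: LH_def less_imp_le)
  obtain M where M: "(SUP y\<in>{0<..}. \<integral>\<^sup>+x. ennreal (\<bar>U (Complex x y)\<bar> powr p x) \<partial>lborel) = ennreal M" "M \<ge> 0"
    using \<open>U \<in> hp_var p\<close> by (auto simp: hp_var_def less_top_ennreal)
  then show "bounded (U ` {z. Im z \<ge> k})"
    using hp_var_abs_le[OF \<open>U \<in> hp_var p\<close> p(2,1) M \<open>k > 0\<close>] unfolding bounded_iff by auto
qed

end
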